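(* Let $D_1,D_2\subset\mathbb{C}$ be domains and for $j=1,2$ let $p_j\colon E\to D_j$ be a holomorphic universal covering that is not injective. Then there exist automorphisms $\varphi_1,\varphi_2\in\operatorname{Aut}(E)$ and a point $q=(q_1,q_2)\in E^2$ with $q_1\neq q_2$ such that $p_j(\varphi_j(q_1))=p_j(\varphi_j(q_2))$ for $j=1,2$ and $$\det\begin{bmatrix}(p_1\circ\varphi_1)'(q_1) & (p_1\circ\varphi_1)'(q_2)\\ (p_2\circ\varphi_2)'(q_1) & (p_2\circ\varphi_2)'(q_2)\end{bmatrix}\neq0.$$
   Context: $E$ denotes the open unit disc in $\mathbb{C}$ and $\operatorname{Aut}(E)$ its group of biholomorphic self-maps. *)

theory Defs
  imports "HOL-Complex_Analysis.Complex_Analysis"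
begin

abbreviation unit_disc :: "complex set" where
  "unit_disc \<equiv> ball 0 1"

definition disc_aut :: "(complex \<Rightarrow> complex) set" where
  "disc_aut = {f. f holomorphic_on unit_disc \<and> f ` unit_disc = unit_disc \<and>
      (\<exists>g. g holomorphic_on unit_disc \<and> g ` unit_disc = unit_disc \<and>
           (\<forall>z\<in>unit_disc. g (f z) = z) \<and> (\<forall>z\<in>unit_disc. f (g z) = z))}"

definition is_domain :: "complex set \<Rightarrow> bool" where
  "is_domain D \<longleftrightarrow> open D \<and> connected D \<and> D \<noteq> {}"

text \<open>Holomorphic universal covering E \<rightarrow> D (E is simply connected, so any
  covering map from E is universal).\<close>
definition holo_univ_covering :: "(complex \<Rightarrow> complex) \<Rightarrow> complex set \<Rightarrow> bool" where
  "holo_univ_covering p D \<longleftrightarrow> p holomorphic_on unit_disc \<and> covering_space unit_disc p D"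

end

theory Submission
  imports Defs
begin

(* Each p_j has a nontrivial deck transformation g_j: a holomorphic self-map of E without fixed
   points and with p_j o g_j = p_j.  By the maximum principle the pseudo-hyperbolic displacement
   rho(z, g_j z) has supremum 1, so by connectedness one value s, larger than both rho(0, g_j 0),
   is attained by both maps, at z_1 and z_2.  Automorphisms phi_j with phi_j 0 = z_j and
   phi_j s = g_j z_j normalise the pair (0, s): F_j = p_j o phi_j takes equal values at 0 and s,
   and F_j'(0) = F_j'(s) d_j with d_j = psi_j'(0) for the conjugated deck map psi_j, which sends
   0 to s.  If the determinant vanishes for (phi_1, phi_2) and also after replacing phi_2 by
   phi_2 o sigma, where sigma swaps 0 and s, then d_2^2 = (1 - s^2)^2.  By the equality case of
   Schwarz's lemma psi_2 is then either the hyperbolic translation by s, whose displacement is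
   at least s everywhere, contradicting rho(0, g_2 0) < s, or it is sigma, which has a fixed
   point. *)

section \<open>Moebius maps and the pseudo-hyperbolic distance\<close>

definition disc_moebius :: "complex \<Rightarrow> complex \<Rightarrow> complex" where
  "disc_moebius w z = (z - w) / (1 - cnj w * z)"

definition pseudo_hyp_dist :: "complex \<Rightarrow> complex \<Rightarrow> real" where
  "pseudo_hyp_dist z w = norm (disc_moebius z w)"

lemma disc_moebius_eq_Moebius_function: "disc_moebius w = Moebius_function 0 w"
  by (simp add: fun_eq_iff disc_moebius_def Moebius_function_simple)

lemma norm_disc_moebius_lt_1: "norm w < 1 \<Longrightarrow> norm z < 1 \<Longrightarrow> norm (disc_moebius w z) < 1"
  by (simp add: disc_moebius_eq_Moebius_function Moebius_function_norm_lt_1)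

lemma disc_moebius_inverse:
  "norm w < 1 \<Longrightarrow> norm z < 1 \<Longrightarrow> disc_moebius (-w) (disc_moebius w z) = z"
  unfolding disc_moebius_eq_Moebius_function by (rule Moebius_function_compose) auto

lemma holomorphic_on_disc_moebius: "norm w < 1 \<Longrightarrow> disc_moebius w holomorphic_on unit_disc"
  unfolding disc_moebius_eq_Moebius_function by (rule Moebius_function_holomorphic)

lemma disc_moebius_denominator_nonzero:
  assumes "norm w < 1" "norm z < 1" shows "1 - cnj w * z \<noteq> 0"
proof
  assume "1 - cnj w * z = 0"
  then have "norm w * norm z = 1" by (metis complex_mod_cnj eq_iff_diff_eq_0 norm_mult norm_one)
  moreover have "norm w * norm z < 1 * 1" by (rule mult_strict_mono') (use assms in auto)
  ultimately show False by simp
qed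

lemma norm_1_minus_cnj_mult_self: "norm w \<le> 1 \<Longrightarrow> norm (1 - cnj w * w) = 1 - (norm w)\<^sup>2"
proof -
  assume "norm w \<le> 1"
  have "1 - cnj w * w = complex_of_real (1 - (norm w)\<^sup>2)"
    by (simp only: complex_norm_square of_real_diff of_real_1 mult.commute[of "cnj w" w])
  then have "norm (1 - cnj w * w) = \<bar>1 - (norm w)\<^sup>2\<bar>" by (simp only: norm_of_real)
  also have "\<dots> = 1 - (norm w)\<^sup>2" using \<open>norm w \<le> 1\<close> by (simp add: power_le_one)
  finally show ?thesis .
qed

lemma disc_moebius_minus: "disc_moebius (-w) (-z) = - disc_moebius w z"
  by (simp add: disc_moebius_def minus_divide_left)

lemma has_field_derivative_disc_moebius:
  assumes "1 - cnj w * z \<noteq> 0"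
  shows "(disc_moebius w has_field_derivative (1 - cnj w * w) / (1 - cnj w * z)\<^sup>2) (at z)"
proof -
  have "((\<lambda>z. (z - w) / (1 - cnj w * z)) has_field_derivative
          (1 * (1 - cnj w * z) - (z - w) * (- cnj w)) / ((1 - cnj w * z) * (1 - cnj w * z))) (at z)"
    using assms by (intro DERIV_divide) (auto intro!: derivative_eq_intros)
  then show ?thesis
    by (simp add: disc_moebius_def[abs_def] power2_eq_square algebra_simps)
qed

lemma pseudo_hyp_dist_lt_1: "norm z < 1 \<Longrightarrow> norm w < 1 \<Longrightarrow> pseudo_hyp_dist z w < 1"
  by (simp add: pseudo_hyp_dist_def norm_disc_moebius_lt_1)

lemma pseudo_hyp_dist_rotate:
  assumes "norm l = 1" shows "pseudo_hyp_dist (l * x) (l * y) = pseudo_hyp_dist x y"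
proof -
  have "cnj l * l = 1" using assms complex_norm_square[of l] by (simp add: mult.commute)
  then have den: "1 - cnj (l * x) * (l * y) = 1 - cnj x * y"
    by (metis complex_cnj_mult mult.assoc mult.left_commute mult_1)
  have num: "l * y - l * x = l * (y - x)" by (simp add: algebra_simps)
  show ?thesis
    unfolding pseudo_hyp_dist_def disc_moebius_def den num norm_divide norm_mult assms by simp
qed

lemma disc_moebius_disc_moebius:
  assumes c: "norm c < 1" and x: "norm x < 1" and y: "norm y < 1"
  defines "A \<equiv> 1 - cnj c * x" and "B \<equiv> 1 - cnj c * y"
  shows "disc_moebius (disc_moebius c x) (disc_moebius c y) = disc_moebius x y * (cnj A / A)"
proof -
  have nz: "A \<noteq> 0" "B \<noteq> 0" "1 - cnj c * c \<noteq> 0" "1 - cnj x * y \<noteq> 0"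
    using disc_moebius_denominator_nonzero c x y by (auto simp: A_def B_def)
  then have "cnj A \<noteq> 0" by simp
  have num: "disc_moebius c y - disc_moebius c x = (y - x) * (1 - cnj c * c) / (A * B)"
    using nz by (simp add: disc_moebius_def A_def B_def field_simps)
  have "cnj (disc_moebius c x) * disc_moebius c y = (cnj x - cnj c) * (y - c) / (cnj A * B)"
    by (simp add: disc_moebius_def A_def B_def)
  moreover have "cnj A * B - (cnj x - cnj c) * (y - c) = (1 - cnj c * c) * (1 - cnj x * y)"
    by (simp add: A_def B_def algebra_simps)
  ultimately have den: "1 - cnj (disc_moebius c x) * disc_moebius c y
      = (1 - cnj c * c) * (1 - cnj x * y) / (cnj A * B)"
    using nz \<open>cnj A \<noteq> 0\<close> by (simp add: eq_divide_eq left_diff_distrib)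
  have "disc_moebius (disc_moebius c x) (disc_moebius c y)
      = (disc_moebius c y - disc_moebius c x) / (1 - cnj (disc_moebius c x) * disc_moebius c y)"
    by (simp add: disc_moebius_def[of "disc_moebius c x"])
  also have "\<dots> = disc_moebius x y * (cnj A / A)"
    unfolding num den using nz \<open>cnj A \<noteq> 0\<close> by (simp add: disc_moebius_def[of x])
  finally show ?thesis .
qed

lemma pseudo_hyp_dist_disc_moebius:
  assumes "norm c < 1" "norm x < 1" "norm y < 1"
  shows "pseudo_hyp_dist (disc_moebius c x) (disc_moebius c y) = pseudo_hyp_dist x y"
proof -
  have "1 - cnj c * x \<noteq> 0" using disc_moebius_denominator_nonzero assms by blast
  then have "norm (cnj (1 - cnj c * x) / (1 - cnj c * x)) = 1"
    by (simp add: norm_divide del: complex_cnj_diff complex_cnj_mult)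
  then show ?thesis
    unfolding pseudo_hyp_dist_def disc_moebius_disc_moebius[OF assms] norm_mult by simp
qed

lemma pseudo_hyp_dist_real_translation_ge:
  assumes s: "0 < s" "s < 1" and q: "norm q < 1"
  shows "s \<le> pseudo_hyp_dist q (disc_moebius (- complex_of_real s) q)"
proof -
  define S where "S = complex_of_real s"
  define w where "w = disc_moebius (-S) q"
  have nS: "norm S < 1" using s by (simp add: S_def)
  have den: "1 + S * q \<noteq> 0" using disc_moebius_denominator_nonzero [of "-S" q] nS q by (simp add: S_def)
  have w1: "norm w < 1" using norm_disc_moebius_lt_1 [of "-S" q] nS q by (simp add: w_def)
  have dw: "1 - cnj q * w \<noteq> 0" using disc_moebius_denominator_nonzero [OF q w1] .
  have we: "w = (q + S) / (1 + S * q)" by (simp add: w_def disc_moebius_def S_def)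
  define D where "D = 1 + S * q - cnj q * q - S * cnj q"
  have num: "w - q = S * (1 - q * q) / (1 + S * q)"
    using den by (simp add: we field_simps)
  have dd: "1 - cnj q * w = D / (1 + S * q)"
    using den by (simp add: we D_def field_simps)
  have D0: "D \<noteq> 0" using dw dd by auto
  have "pseudo_hyp_dist q w = norm (S * (1 - q * q)) / norm D"
    using den D0 by (simp add: pseudo_hyp_dist_def disc_moebius_def num dd norm_divide)
  also have "\<dots> = s * norm (1 - q * q) / norm D"
    using s by (simp add: S_def norm_mult)
  finally have r: "pseudo_hyp_dist q w = s * norm (1 - q * q) / norm D" .
  have sq: "(norm D)^2 \<le> (norm (1 - q * q))^2"
  proof -
    have "(norm D)^2 = (1 - (Re q)^2 - (Im q)^2)^2 + (2 * s * Im q)^2"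
      unfolding cmod_power2 by (simp add: D_def S_def power2_eq_square algebra_simps)
    moreover have "(norm (1 - q * q))^2 = (1 - (Re q)^2 + (Im q)^2)^2 + (2 * Re q * Im q)^2"
      unfolding cmod_power2 by (simp add: power2_eq_square algebra_simps)
    moreover have "(1 - (Re q)^2 - (Im q)^2)^2 + (2 * s * Im q)^2 \<le> (1 - (Re q)^2 + (Im q)^2)^2 + (2 * Re q * Im q)^2"
    proof -
      have "(1 - (Re q)^2 + (Im q)^2)^2 + (2 * Re q * Im q)^2 - ((1 - (Re q)^2 - (Im q)^2)^2 + (2 * s * Im q)^2)
            = 4 * (Im q)^2 * (1 - s^2)"
        by (simp add: power2_eq_square algebra_simps)
      moreover have "0 \<le> 4 * (Im q)^2 * (1 - s^2)" using s by (simp add: abs_square_le_1 less_imp_le)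
      ultimately show ?thesis by linarith
    qed
    ultimately show ?thesis by simp
  qed
  have le: "norm D \<le> norm (1 - q * q)" using sq by (rule power2_le_imp_le) simp
  have "s * norm D \<le> s * norm (1 - q * q)" using le s by simp
  then have "s \<le> s * norm (1 - q * q) / norm D" using D0 by (simp add: field_simps)
  then show ?thesis using r by (simp add: w_def S_def)
qed

lemma disc_swap_has_fixed_point:
  assumes w: "norm w < 1"
  obtains r where "norm r < 1" "- disc_moebius w r = r"
proof -
  define t where "t = sqrt (1 - (norm w)\<^sup>2)"
  have t: "0 \<le> t" "t\<^sup>2 = 1 - (norm w)\<^sup>2"
    using w abs_square_less_1[of "norm w"] by (simp_all add: t_def)
  define T where "T = complex_of_real t"
  have "T * T = complex_of_real (t\<^sup>2)" by (simp add: T_def power2_eq_square)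
  also have "\<dots> = complex_of_real (1 - (norm w)\<^sup>2)" by (simp only: t(2))
  also have "\<dots> = 1 - cnj w * w"
    by (simp only: complex_norm_square of_real_diff of_real_1 mult.commute[of "cnj w" w])
  finally have T: "T * T = 1 - cnj w * w" "1 + T \<noteq> 0"
    using t(1) of_real_eq_0_iff[of "1 + t"] by (simp_all add: T_def)
  \<comment> \<open>the root in the disc of \<open>cnj w * r\<^sup>2 - 2 * r + w = 0\<close>\<close>
  define r where "r = w / (1 + T)"
  have "1 + T = complex_of_real (1 + t)" by (simp add: T_def)
  then have "norm r = norm w / \<bar>1 + t\<bar>"
    unfolding r_def by (simp only: norm_divide norm_of_real)
  then have r: "norm r < 1" using w t(1) by simp
  have rT: "r * (1 + T) = w" using T(2) by (simp add: r_def)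
  have "(cnj w * r * r - 2 * r + w) * ((1 + T) * (1 + T))
      = cnj w * (r * (1 + T)) * (r * (1 + T)) - 2 * (r * (1 + T)) * (1 + T) + w * ((1 + T) * (1 + T))"
    by (simp add: algebra_simps)
  also have "\<dots> = w * (cnj w * w - 1 + T * T)" unfolding rT by (simp add: algebra_simps)
  finally have "cnj w * r * r - 2 * r + w = 0" using T by simp
  moreover have "w - r - r * (1 - cnj w * r) = cnj w * r * r - 2 * r + w"
    by (simp add: algebra_simps)
  ultimately have "w - r = r * (1 - cnj w * r)" by simp
  then have "- disc_moebius w r = r"
    using disc_moebius_denominator_nonzero[OF w r] by (simp add: disc_moebius_def minus_divide_left)
  with r that show ?thesis by blast
qed

lemma disc_self_map_eq_moebius_if_extremal_deriv:
  assumes hol: "\<psi> holomorphic_on unit_disc" and into: "\<And>q. q \<in> unit_disc \<Longrightarrow> \<psi> q \<in> unit_disc"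
    and \<psi>0: "\<psi> 0 = w" and extremal: "norm (deriv \<psi> 0) = 1 - (norm w)\<^sup>2" and q: "norm q < 1"
  shows "\<psi> q = disc_moebius (-w) (deriv \<psi> 0 / (1 - cnj w * w) * q)"
proof -
  have w: "norm w < 1" using into[of 0] \<psi>0 by simp
  have nz: "1 - cnj w * w \<noteq> 0" using disc_moebius_denominator_nonzero[OF w w] .
  define \<theta> where "\<theta> = disc_moebius w \<circ> \<psi>"
  have hol\<theta>: "\<theta> holomorphic_on unit_disc"
    unfolding \<theta>_def
    by (rule holomorphic_on_compose_gen[OF hol holomorphic_on_disc_moebius[OF w]]) (use into in auto)
  have "deriv \<theta> 0 = deriv (disc_moebius w) w * deriv \<psi> 0"
  proof -
    have "\<psi> field_differentiable at 0"
      by (rule holomorphic_on_imp_differentiable_at[OF hol open_ball]) simp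
    moreover have "disc_moebius w field_differentiable at (\<psi> 0)"
      using holomorphic_on_imp_differentiable_at[OF holomorphic_on_disc_moebius[OF w] open_ball] w \<psi>0
      by simp
    ultimately show ?thesis unfolding \<theta>_def \<psi>0[symmetric] by (rule deriv_chain)
  qed
  also have "deriv (disc_moebius w) w = 1 / (1 - cnj w * w)"
    using DERIV_imp_deriv[OF has_field_derivative_disc_moebius[OF nz]] nz
    by (simp add: power2_eq_square)
  finally have d\<theta>: "deriv \<theta> 0 = deriv \<psi> 0 / (1 - cnj w * w)" by simp
  then have "norm (deriv \<theta> 0) = 1"
    using extremal w abs_square_less_1[of "norm w"] by (simp add: norm_divide norm_1_minus_cnj_mult_self)
  moreover have "\<theta> 0 = 0" by (simp add: \<theta>_def \<psi>0 disc_moebius_def)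
  moreover have "norm (\<theta> z) < 1" if "norm z < 1" for z
    using into[of z] that w by (simp add: \<theta>_def norm_disc_moebius_lt_1)
  ultimately obtain \<alpha> where \<alpha>: "\<And>z. norm z < 1 \<Longrightarrow> \<theta> z = \<alpha> * z"
    using Schwarz_Lemma'[OF hol\<theta>] by metis
  have "deriv \<theta> 0 = deriv (\<lambda>z. \<alpha> * z) 0"
  proof (rule deriv_cong_ev)
    show "\<forall>\<^sub>F z in nhds 0. \<theta> z = \<alpha> * z"
      using eventually_nhds_in_open[of unit_disc 0] by (auto elim!: eventually_mono simp: \<alpha>)
  qed simp
  then have "\<alpha> = deriv \<psi> 0 / (1 - cnj w * w)" using d\<theta> by simp
  moreover have "\<psi> q = disc_moebius (-w) (\<theta> q)"
    using disc_moebius_inverse[OF w, of "\<psi> q"] into q by (simp add: \<theta>_def)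
  ultimately show ?thesis using \<alpha> q by simp
qed

section \<open>Automorphisms of the disc\<close>

lemma image_eq_if_right_inverse:
  assumes "f ` A \<subseteq> A" "g ` A \<subseteq> A" "\<And>z. z \<in> A \<Longrightarrow> f (g z) = z"
  shows "f ` A = A"
proof (intro subset_antisym subsetI)
  fix z assume "z \<in> A"
  then show "z \<in> f ` A" using assms(2,3) by (metis image_eqI image_subset_iff)
qed (use assms(1) in blast)

lemma disc_autI:
  assumes "f holomorphic_on unit_disc" "g holomorphic_on unit_disc"
    "f ` unit_disc \<subseteq> unit_disc" "g ` unit_disc \<subseteq> unit_disc"
    "\<And>z. z \<in> unit_disc \<Longrightarrow> g (f z) = z" "\<And>z. z \<in> unit_disc \<Longrightarrow> f (g z) = z"
  shows "f \<in> disc_aut"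
  unfolding disc_aut_def mem_Collect_eq
proof (intro conjI exI[of _ g] ballI)
  show "f ` unit_disc = unit_disc" "g ` unit_disc = unit_disc"
    using image_eq_if_right_inverse assms(3-6) by metis+
qed (use assms in auto)

lemma disc_aut_inverse:
  assumes "\<phi> \<in> disc_aut"
  obtains h where "h holomorphic_on unit_disc" "\<And>z. z \<in> unit_disc \<Longrightarrow> h z \<in> unit_disc"
    "\<And>z. z \<in> unit_disc \<Longrightarrow> h (\<phi> z) = z" "\<And>z. z \<in> unit_disc \<Longrightarrow> \<phi> (h z) = z"
proof -
  obtain h where h: "h holomorphic_on unit_disc" "h ` unit_disc = unit_disc"
    "\<forall>z\<in>unit_disc. h (\<phi> z) = z" "\<forall>z\<in>unit_disc. \<phi> (h z) = z"
    using assms unfolding disc_aut_def by blast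
  have "h z \<in> unit_disc" if "z \<in> unit_disc" for z
    using imageI[OF that, of h] unfolding h(2) .
  then show ?thesis using that h(1,3,4) by simp
qed

lemma disc_autD:
  assumes "\<phi> \<in> disc_aut"
  shows "\<phi> holomorphic_on unit_disc" "\<And>z. z \<in> unit_disc \<Longrightarrow> \<phi> z \<in> unit_disc"
    "inj_on \<phi> unit_disc"
proof -
  obtain h where "\<phi> holomorphic_on unit_disc" "\<phi> ` unit_disc = unit_disc"
    "\<forall>z\<in>unit_disc. h (\<phi> z) = z"
    using assms unfolding disc_aut_def by blast
  then show "\<phi> holomorphic_on unit_disc" "\<And>z. z \<in> unit_disc \<Longrightarrow> \<phi> z \<in> unit_disc"
    "inj_on \<phi> unit_disc"
    by (simp, metis imageI, metis inj_on_inverseI)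
qed

lemma disc_aut_comp:
  assumes "f \<in> disc_aut" "h \<in> disc_aut" shows "f \<circ> h \<in> disc_aut"
proof -
  obtain f' where f': "f' holomorphic_on unit_disc" "\<And>z. z \<in> unit_disc \<Longrightarrow> f' z \<in> unit_disc"
    "\<And>z. z \<in> unit_disc \<Longrightarrow> f' (f z) = z" "\<And>z. z \<in> unit_disc \<Longrightarrow> f (f' z) = z"
    using disc_aut_inverse[OF assms(1)] by blast
  obtain h' where h': "h' holomorphic_on unit_disc" "\<And>z. z \<in> unit_disc \<Longrightarrow> h' z \<in> unit_disc"
    "\<And>z. z \<in> unit_disc \<Longrightarrow> h' (h z) = z" "\<And>z. z \<in> unit_disc \<Longrightarrow> h (h' z) = z"
    using disc_aut_inverse[OF assms(2)] by blast
  note f = disc_autD[OF assms(1)] and h = disc_autD[OF assms(2)]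
  show ?thesis
  proof (rule disc_autI[where g = "h' \<circ> f'"])
    show "f \<circ> h holomorphic_on unit_disc"
      by (rule holomorphic_on_compose_gen[OF h(1) f(1)]) (use h(2) in blast)
    show "h' \<circ> f' holomorphic_on unit_disc"
      by (rule holomorphic_on_compose_gen[OF f'(1) h'(1)]) (use f'(2) in blast)
  qed (use f h f' h' in auto)
qed

lemma deriv_disc_aut_nonzero:
  assumes "\<phi> \<in> disc_aut" "z \<in> unit_disc" shows "deriv \<phi> z \<noteq> 0"
  using holomorphic_injective_imp_regular[OF disc_autD(1)[OF assms(1)] open_ball
      disc_autD(3)[OF assms(1)] assms(2)] .

lemma disc_aut_conjugate:
  assumes "\<phi> \<in> disc_aut" "g holomorphic_on unit_disc" "g ` unit_disc \<subseteq> unit_disc"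
  obtains \<psi> where "\<psi> holomorphic_on unit_disc" "\<psi> ` unit_disc \<subseteq> unit_disc"
    "\<And>q. q \<in> unit_disc \<Longrightarrow> \<phi> (\<psi> q) = g (\<phi> q)"
proof -
  obtain h where h: "h holomorphic_on unit_disc" "\<And>z. z \<in> unit_disc \<Longrightarrow> h z \<in> unit_disc"
    "\<And>z. z \<in> unit_disc \<Longrightarrow> h (\<phi> z) = z" "\<And>z. z \<in> unit_disc \<Longrightarrow> \<phi> (h z) = z"
    by (rule disc_aut_inverse[OF assms(1)]) blast
  note \<phi> = disc_autD[OF assms(1)]
  have g: "g z \<in> unit_disc" if "z \<in> unit_disc" for z using assms(3) that by blast
  have "g \<circ> \<phi> holomorphic_on unit_disc"
    by (rule holomorphic_on_compose_gen[OF \<phi>(1) assms(2)]) (use \<phi>(2) in blast)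
  then have "h \<circ> (g \<circ> \<phi>) holomorphic_on unit_disc"
    by (rule holomorphic_on_compose_gen[OF _ h(1)]) (use \<phi>(2) g in auto)
  moreover have "(h \<circ> (g \<circ> \<phi>)) ` unit_disc \<subseteq> unit_disc"
    using h(2) \<phi>(2) g by auto
  moreover have "\<phi> ((h \<circ> (g \<circ> \<phi>)) q) = g (\<phi> q)" if "q \<in> unit_disc" for q
    using h(4) \<phi>(2) g that by auto
  ultimately show ?thesis by (rule that)
qed

lemma disc_aut_two_points:
  assumes z: "norm z < 1" and w: "norm w < 1" and "z \<noteq> w"
  obtains \<phi> where "\<phi> \<in> disc_aut" "\<phi> 0 = z" "\<phi> (complex_of_real (pseudo_hyp_dist z w)) = w"
    "\<And>x y. norm x < 1 \<Longrightarrow> norm y < 1 \<Longrightarrow> pseudo_hyp_dist (\<phi> x) (\<phi> y) = pseudo_hyp_dist x y"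
proof -
  define s where "s = pseudo_hyp_dist z w"
  define l where "l = disc_moebius z w / complex_of_real s"
  have "disc_moebius z w \<noteq> 0"
    using \<open>z \<noteq> w\<close> disc_moebius_denominator_nonzero[OF z w] by (simp add: disc_moebius_def)
  then have s: "s > 0" and l: "norm l = 1" and ls: "l * complex_of_real s = disc_moebius z w"
    by (simp_all add: s_def l_def pseudo_hyp_dist_def norm_divide)
  define \<phi> where "\<phi> q = disc_moebius (-z) (l * q)" for q
  have lq: "norm (l * q) < 1" if "norm q < 1" for q using that l by (simp add: norm_mult)
  have "\<phi> \<in> disc_aut"
  proof (rule disc_autI[where g = "\<lambda>v. disc_moebius z v / l"])
    show "\<phi> holomorphic_on unit_disc"
      unfolding \<phi>_def
      by (rule holomorphic_on_compose_gen[of "\<lambda>q. l * q", unfolded o_def, OF _ holomorphic_on_disc_moebius])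
        (use z lq in \<open>auto intro!: holomorphic_intros\<close>)
    show "(\<lambda>v. disc_moebius z v / l) holomorphic_on unit_disc"
      using l z by (auto intro!: holomorphic_intros holomorphic_on_disc_moebius)
    show "\<phi> ` unit_disc \<subseteq> unit_disc"
      using z lq by (auto simp: \<phi>_def norm_disc_moebius_lt_1)
    show "(\<lambda>v. disc_moebius z v / l) ` unit_disc \<subseteq> unit_disc"
      using z l by (auto simp: norm_divide norm_disc_moebius_lt_1)
    show "disc_moebius z (\<phi> q) / l = q" if "q \<in> unit_disc" for q
      using disc_moebius_inverse[of "-z" "l * q"] z lq[of q] that l by (auto simp: \<phi>_def)
    show "\<phi> (disc_moebius z v / l) = v" if "v \<in> unit_disc" for v
      using disc_moebius_inverse[of z v] z that l by (auto simp: \<phi>_def)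
  qed
  moreover have "\<phi> 0 = z" by (simp add: \<phi>_def disc_moebius_def)
  moreover have "\<phi> (complex_of_real s) = w"
    using z w by (simp add: \<phi>_def ls disc_moebius_inverse)
  moreover have "pseudo_hyp_dist (\<phi> x) (\<phi> y) = pseudo_hyp_dist x y" if "norm x < 1" "norm y < 1" for x y
    using that z lq by (simp add: \<phi>_def pseudo_hyp_dist_disc_moebius pseudo_hyp_dist_rotate l)
  ultimately show ?thesis using that unfolding s_def by blast
qed

lemma disc_swap_in_disc_aut:
  assumes "norm w < 1" shows "(\<lambda>z. - disc_moebius w z) \<in> disc_aut"
proof -
  have inv: "- disc_moebius w (- disc_moebius w z) = z" if "norm z < 1" for z
    using disc_moebius_minus[of "-w" "disc_moebius w z"] disc_moebius_inverse[OF assms that] by simp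
  show ?thesis
    by (rule disc_autI[where g = "\<lambda>z. - disc_moebius w z"])
      (use assms inv in \<open>auto intro!: holomorphic_intros holomorphic_on_disc_moebius
        simp: norm_disc_moebius_lt_1\<close>)
qed

lemma deriv_comp_disc_swap:
  assumes F: "F holomorphic_on unit_disc" and w: "norm w < 1"
  shows "deriv (F \<circ> (\<lambda>z. - disc_moebius w z)) 0 = deriv F w * (cnj w * w - 1)"
    and "deriv (F \<circ> (\<lambda>z. - disc_moebius w z)) w = deriv F 0 / (cnj w * w - 1)"
proof -
  have chain: "deriv (F \<circ> (\<lambda>z. - disc_moebius w z)) q
      = deriv F (- disc_moebius w q) * ((cnj w * w - 1) / (1 - cnj w * q)\<^sup>2)" if q: "norm q < 1" for q
  proof -
    have \<sigma>': "((\<lambda>z. - disc_moebius w z) has_field_derivative (cnj w * w - 1) / (1 - cnj w * q)\<^sup>2) (at q)"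
      using DERIV_minus[OF has_field_derivative_disc_moebius[OF disc_moebius_denominator_nonzero[OF w q]]]
      by (simp add: minus_divide_left)
    have "F field_differentiable at (- disc_moebius w q)"
      using F w q by (intro holomorphic_on_imp_differentiable_at[OF F open_ball])
        (simp add: norm_disc_moebius_lt_1)
    with \<sigma>' show ?thesis
      using deriv_chain[of "\<lambda>z. - disc_moebius w z" q F] DERIV_imp_deriv[OF \<sigma>']
      by (auto simp: field_differentiable_def)
  qed
  have "cnj w * w - 1 \<noteq> 0" using disc_moebius_denominator_nonzero[OF w w] by simp
  then have "(cnj w * w - 1) / (1 - cnj w * w)\<^sup>2 = 1 / (cnj w * w - 1)"
    unfolding power2_commute[of 1] by (simp add: power2_eq_square)
  then show "deriv (F \<circ> (\<lambda>z. - disc_moebius w z)) 0 = deriv F w * (cnj w * w - 1)"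
    and "deriv (F \<circ> (\<lambda>z. - disc_moebius w z)) w = deriv F 0 / (cnj w * w - 1)"
    using chain[of 0] chain[of w] w by (simp_all add: disc_moebius_def)
qed

section \<open>Displacement of self-maps without fixed points\<close>

lemma continuous_on_displacement:
  assumes "continuous_on unit_disc g" "g ` unit_disc \<subseteq> unit_disc"
  shows "continuous_on unit_disc (\<lambda>z. pseudo_hyp_dist z (g z))"
  unfolding pseudo_hyp_dist_def disc_moebius_def
  using assms disc_moebius_denominator_nonzero by (auto intro!: continuous_intros)

lemma norm_diff_le_pseudo_hyp_dist:
  assumes z: "norm z < 1" and w: "norm w < 1" and r: "pseudo_hyp_dist z w \<le> r" "r < 1"
  shows "norm (w - z) \<le> r * (1 - (norm z)\<^sup>2) / (1 - r)"
proof -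
  have r0: "0 \<le> r" using r(1) unfolding pseudo_hyp_dist_def by (meson norm_ge_zero order_trans)
  have "norm (w - z) = pseudo_hyp_dist z w * norm (1 - cnj z * w)"
    using disc_moebius_denominator_nonzero[OF z w]
    by (simp add: pseudo_hyp_dist_def disc_moebius_def norm_divide)
  also have "\<dots> \<le> r * norm (1 - cnj z * w)" by (rule mult_right_mono) (use r in auto)
  also have "norm (1 - cnj z * w) \<le> norm (1 - cnj z * z) + norm (cnj z * (w - z))"
    using norm_triangle_ineq4[of "1 - cnj z * z" "cnj z * (w - z)"] by (simp add: algebra_simps)
  also have "\<dots> \<le> (1 - (norm z)\<^sup>2) + norm (w - z)"
    using z norm_1_minus_cnj_mult_self[of z] by (simp add: norm_mult mult_left_le_one_le)
  finally have "norm (w - z) \<le> r * ((1 - (norm z)\<^sup>2) + norm (w - z))"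
    using r0 by (simp add: mult_left_mono)
  then have "norm (w - z) * (1 - r) \<le> r * (1 - (norm z)\<^sup>2)" by (simp add: algebra_simps)
  then show ?thesis using r(2) by (simp add: field_simps)
qed

(* Bounded displacement would force |g z - z| -> 0 at the boundary, so by the maximum principle
   on the circles |z| = R, R -> 1, g 0 = 0. *)
lemma displacement_unbounded:
  assumes hol: "g holomorphic_on unit_disc" and gE: "g ` unit_disc \<subseteq> unit_disc"
    and g0: "g 0 \<noteq> 0" and r: "r < 1"
  shows "\<exists>z\<in>unit_disc. r < pseudo_hyp_dist z (g z)"
proof (rule ccontr)
  assume "\<not> ?thesis"
  then have le: "pseudo_hyp_dist z (g z) \<le> r" if "z \<in> unit_disc" for z
    using that by force
  have "0 \<le> pseudo_hyp_dist 0 (g 0)" by (simp add: pseudo_hyp_dist_def)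
  then have "0 \<le> r" using le[of 0] by simp
  define C where "C = r / (1 - r)"
  have bound: "norm (g 0) \<le> C * (1 - R\<^sup>2)" if R: "0 < R" "R < 1" for R
  proof -
    have sub: "cball 0 R \<subseteq> unit_disc" using R by auto
    have hol': "(\<lambda>z. g z - z) holomorphic_on unit_disc" by (intro holomorphic_intros hol)
    have "norm (g 0 - 0) \<le> C * (1 - R\<^sup>2)"
    proof (rule maximum_modulus_frontier[where S = "ball 0 R" and f = "\<lambda>z. g z - z"])
      show "(\<lambda>z. g z - z) holomorphic_on interior (ball 0 R)"
        using holomorphic_on_subset[OF hol' subset_trans[OF ball_subset_cball sub]] by simp
      show "continuous_on (closure (ball 0 R)) (\<lambda>z. g z - z)"
        using continuous_on_subset[OF holomorphic_on_imp_continuous_on[OF hol'] sub] R by simp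
      show "norm (g z - z) \<le> C * (1 - R\<^sup>2)" if "z \<in> frontier (ball 0 R)" for z
      proof -
        have "norm z = R" using that R by simp
        then have "z \<in> unit_disc" using R by simp
        moreover have "g z \<in> unit_disc" using gE \<open>z \<in> unit_disc\<close> by blast
        ultimately have "norm (g z - z) \<le> r * (1 - R\<^sup>2) / (1 - r)"
          using norm_diff_le_pseudo_hyp_dist[of z "g z" r] le[of z] r \<open>norm z = R\<close> by simp
        then show ?thesis by (simp add: C_def)
      qed
    qed (use R in auto)
    then show ?thesis by simp
  qed
  have "((\<lambda>R. C * (1 - R\<^sup>2)) \<longlongrightarrow> C * (1 - 1\<^sup>2)) (at_left (1::real))"
    by (intro tendsto_intros)
  then have lim: "((\<lambda>R. C * (1 - R\<^sup>2)) \<longlongrightarrow> 0) (at_left (1::real))" by simp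
  have "\<forall>\<^sub>F R in at_left 1. norm (g 0) \<le> C * (1 - R\<^sup>2)"
    using eventually_at_left_real[OF zero_less_one] by eventually_elim (simp add: bound)
  then have "norm (g 0) \<le> 0"
    using tendsto_lowerbound[OF lim] trivial_limit_at_left_real by blast
  then show False using g0 by simp
qed

lemma displacement_attains_between:
  assumes "continuous_on unit_disc g" "g ` unit_disc \<subseteq> unit_disc" "x \<in> unit_disc" "y \<in> unit_disc"
    and "pseudo_hyp_dist x (g x) \<le> s" "s \<le> pseudo_hyp_dist y (g y)"
  shows "\<exists>z\<in>unit_disc. pseudo_hyp_dist z (g z) = s"
proof -
  let ?d = "\<lambda>z. pseudo_hyp_dist z (g z)"
  have "connected (?d ` unit_disc)"
    by (intro connected_continuous_image continuous_on_displacement assms convex_connected convex_ball)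
  then have "{?d x .. ?d y} \<subseteq> ?d ` unit_disc"
    by (rule connected_contains_Icc) (use assms(3,4) in blast)+
  then show ?thesis using assms by auto
qed

lemma common_displacement_value:
  assumes hol1: "g1 holomorphic_on unit_disc" and g1E: "g1 ` unit_disc \<subseteq> unit_disc" and "g1 0 \<noteq> 0"
    and hol2: "g2 holomorphic_on unit_disc" and g2E: "g2 ` unit_disc \<subseteq> unit_disc" and "g2 0 \<noteq> 0"
  obtains s z1 z2 where "pseudo_hyp_dist 0 (g1 0) < s" "pseudo_hyp_dist 0 (g2 0) < s" "s < 1"
    "z1 \<in> unit_disc" "pseudo_hyp_dist z1 (g1 z1) = s" "z2 \<in> unit_disc" "pseudo_hyp_dist z2 (g2 z2) = s"
proof -
  define m where "m = max (pseudo_hyp_dist 0 (g1 0)) (pseudo_hyp_dist 0 (g2 0))"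
  have "m < 1" using g1E g2E by (auto simp: m_def image_subset_iff intro!: pseudo_hyp_dist_lt_1)
  then obtain x1 x2 where x: "x1 \<in> unit_disc" "m < pseudo_hyp_dist x1 (g1 x1)"
      "x2 \<in> unit_disc" "m < pseudo_hyp_dist x2 (g2 x2)"
    using displacement_unbounded assms by metis
  define s where "s = min (pseudo_hyp_dist x1 (g1 x1)) (pseudo_hyp_dist x2 (g2 x2))"
  have "s < 1" using x g1E by (auto simp: s_def min_less_iff_disj image_subset_iff intro!: pseudo_hyp_dist_lt_1)
  moreover have "m < s" using x by (simp add: s_def)
  moreover obtain z1 where "z1 \<in> unit_disc" "pseudo_hyp_dist z1 (g1 z1) = s"
    using displacement_attains_between[of g1 0 x1 s] holomorphic_on_imp_continuous_on[OF hol1]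
      g1E x \<open>m < s\<close> by (auto simp: m_def s_def)
  moreover obtain z2 where "z2 \<in> unit_disc" "pseudo_hyp_dist z2 (g2 z2) = s"
    using displacement_attains_between[of g2 0 x2 s] holomorphic_on_imp_continuous_on[OF hol2]
      g2E x \<open>m < s\<close> by (auto simp: m_def s_def)
  ultimately show ?thesis using that by (auto simp: m_def)
qed

section \<open>Holomorphic coverings\<close>

lemma covering_space_locally_injective:
  assumes cov: "covering_space C p D" and "open C" and z: "z \<in> C"
  obtains T where "z \<in> T" "open T" "T \<subseteq> C" "inj_on p T"
proof -
  obtain T u q where T: "z \<in> T" "openin (top_of_set C) T" "homeomorphism T u p q"
    using covering_space_local_homeomorphism[OF cov z] by metis
  have "open T" using T(2) \<open>open C\<close> openin_open_trans by blast
  moreover have "T \<subseteq> C" using T(2) openin_imp_subset by blast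
  moreover have "inj_on p T" using T(3) unfolding homeomorphism_def by (metis inj_on_inverseI)
  ultimately show ?thesis using that T(1) by blast
qed

lemma deriv_holomorphic_covering_nonzero:
  assumes hol: "p holomorphic_on C" and cov: "covering_space C p D" and "open C" and z: "z \<in> C"
  shows "deriv p z \<noteq> 0"
proof -
  obtain T where T: "z \<in> T" "open T" "T \<subseteq> C" "inj_on p T"
    using covering_space_locally_injective[OF cov \<open>open C\<close> z] by blast
  show ?thesis
    using holomorphic_injective_imp_regular[OF holomorphic_on_subset[OF hol T(3)] T(2,4,1)] .
qed

lemma holomorphic_covering_lift_holomorphic:
  assumes hol: "p holomorphic_on C" and cov: "covering_space C p D" and "open C"
    and "open U" and f: "f holomorphic_on U" and g: "continuous_on U g" "g ` U \<subseteq> C"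
    and lift: "\<And>y. y \<in> U \<Longrightarrow> p (g y) = f y"
  shows "g holomorphic_on U"
  unfolding holomorphic_on_open[OF \<open>open U\<close>]
proof
  fix y assume y: "y \<in> U"
  then have "g y \<in> C" using g(2) by blast
  then obtain T where T: "g y \<in> T" "open T" "T \<subseteq> C" "inj_on p T"
    using covering_space_locally_injective[OF cov \<open>open C\<close>] by metis
  have holT: "p holomorphic_on T" using holomorphic_on_subset[OF hol T(3)] .
  obtain h where h: "h holomorphic_on p ` T" "\<And>x. x \<in> T \<Longrightarrow> h (p x) = x"
    using holomorphic_has_inverse[OF holT T(2,4)] by metis
  define V where "V = U \<inter> g -` T"
  have "open V" unfolding V_def by (rule continuous_open_preimage[OF g(1) \<open>open U\<close> T(2)])
  moreover have "y \<in> V" using y T(1) by (simp add: V_def)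
  moreover have "(h \<circ> f) v = g v" if "v \<in> V" for v
    using that h(2)[of "g v"] lift[of v] by (auto simp: V_def)
  moreover have "f y \<in> p ` T" using lift[OF y] T(1) by (metis image_eqI)
  then have "(h \<circ> f has_field_derivative deriv h (f y) * deriv f y) (at y)"
    using DERIV_chain[OF holomorphic_derivI[OF h(1) open_mapping_thm3[OF holT T(2,4)]]
        holomorphic_derivI[OF f \<open>open U\<close> y]] by simp
  ultimately have "(g has_field_derivative deriv h (f y) * deriv f y) (at y)"
    using has_field_derivative_transform_within_open by blast
  then show "\<exists>f'. (g has_field_derivative f') (at y)" by blast
qed

lemma holomorphic_covering_nontrivial_deck_transformation:
  assumes hol: "p holomorphic_on C" and cov: "covering_space C p D"
    and "open C" and "simply_connected C" and "\<not> inj_on p C"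
  obtains g where "g holomorphic_on C" "g ` C \<subseteq> C"
    "\<And>y. y \<in> C \<Longrightarrow> p (g y) = p y" "\<And>y. y \<in> C \<Longrightarrow> g y \<noteq> y"
proof -
  obtain a b where ab: "a \<in> C" "b \<in> C" "a \<noteq> b" "p a = p b"
    using \<open>\<not> inj_on p C\<close> unfolding inj_on_def by blast
  have contp: "continuous_on C p" using covering_space_imp_continuous[OF cov] .
  have pC: "p \<in> C \<rightarrow> D" using covering_space_imp_surjective[OF cov] by blast
  obtain g where g: "continuous_on C g" "g \<in> C \<rightarrow> C" "g a = b" "\<And>y. y \<in> C \<Longrightarrow> p (g y) = p y"
    using covering_space_lift_strong[OF cov ab(2,1) \<open>simply_connected C\<close>
        open_imp_locally_path_connected[OF \<open>open C\<close>] contp pC] ab(4) by metis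
  have gC: "g ` C \<subseteq> C" using g(2) by blast
  have "g holomorphic_on C"
    using holomorphic_covering_lift_holomorphic[OF hol cov \<open>open C\<close> \<open>open C\<close> hol g(1) gC g(4)] .
  moreover have "g c \<noteq> c" if c: "c \<in> C" for c
  proof
    assume "g c = c"
    have "g a = id a"
    proof (rule covering_space_lift_unique[OF cov, where f = p and T = C and ?g1.0 = g and ?g2.0 = id
          and a = c and x = a])
      show "g c = id c" using \<open>g c = c\<close> by simp
    qed (use contp pC g c ab(1) simply_connected_imp_connected[OF \<open>simply_connected C\<close>] in auto)
    then show False using g(3) ab(3) by simp
  qed
  ultimately show ?thesis using that gC g(4) by blast
qed

section \<open>Normal form of a pair of coverings\<close>

lemma deriv_invariant_under_self_map:
  assumes F: "F holomorphic_on A" and \<psi>: "\<psi> holomorphic_on A" and "open A" and x: "x \<in> A" "\<psi> x \<in> A"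
    and inv: "\<And>q. q \<in> A \<Longrightarrow> F (\<psi> q) = F q"
  shows "deriv F (\<psi> x) * deriv \<psi> x = deriv F x"
proof -
  have "deriv (F \<circ> \<psi>) x = deriv F (\<psi> x) * deriv \<psi> x"
    by (intro deriv_chain holomorphic_on_imp_differentiable_at[OF \<psi> \<open>open A\<close> x(1)]
        holomorphic_on_imp_differentiable_at[OF F \<open>open A\<close> x(2)])
  moreover have "deriv (F \<circ> \<psi>) x = deriv F x"
  proof (rule deriv_cong_ev)
    show "\<forall>\<^sub>F q in nhds x. (F \<circ> \<psi>) q = F q"
      using eventually_nhds_in_open[OF \<open>open A\<close> x(1)] by (auto elim!: eventually_mono simp: inv)
  qed simp
  ultimately show ?thesis by simp
qed

lemma determinants_vanish_imp_square_eq: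
  fixes a1 a2 b1 b2 d1 d2 c :: "'a::field"
  assumes "a1 = b1 * d1" "a2 = b2 * d2" "b1 \<noteq> 0" "b2 \<noteq> 0" "c \<noteq> 0"
    and "a1 * b2 - b1 * a2 = 0" "a1 * (a2 / c) - b1 * (b2 * c) = 0"
  shows "d2\<^sup>2 = c\<^sup>2"
proof -
  have "b1 * b2 * (d1 - d2) = 0" using assms(1,2,6) by (simp add: algebra_simps)
  then have "d1 = d2" using assms(3,4) by simp
  have "b1 * b2 * (d1 * d2 - c * c) / c = 0" using assms(1,2,5,7) by (simp add: field_simps)
  then have "d1 * d2 = c * c" using assms(3-5) by simp
  then show ?thesis using \<open>d1 = d2\<close> by (simp add: power2_eq_square)
qed

lemma deck_conjugate_deriv_not_extremal:
  assumes g_free: "\<And>y. y \<in> unit_disc \<Longrightarrow> g y \<noteq> y" and g0: "pseudo_hyp_dist 0 (g 0) < s"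
    and s: "0 < s" "s < 1" and \<phi>: "\<phi> \<in> disc_aut"
    and isometry: "\<And>x y. norm x < 1 \<Longrightarrow> norm y < 1 \<Longrightarrow> pseudo_hyp_dist (\<phi> x) (\<phi> y) = pseudo_hyp_dist x y"
    and \<psi>: "\<psi> holomorphic_on unit_disc" "\<psi> ` unit_disc \<subseteq> unit_disc" "\<psi> 0 = complex_of_real s"
    and conj: "\<And>q. q \<in> unit_disc \<Longrightarrow> \<phi> (\<psi> q) = g (\<phi> q)"
  shows "(deriv \<psi> 0)\<^sup>2 \<noteq> (1 - (complex_of_real s)\<^sup>2)\<^sup>2"
proof
  define S where "S = complex_of_real s"
  have S: "norm S < 1" "cnj S = S" using s by (simp_all add: S_def)
  have nz: "1 - cnj S * S \<noteq> 0" using disc_moebius_denominator_nonzero[OF S(1) S(1)] .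
  assume "(deriv \<psi> 0)\<^sup>2 = (1 - (complex_of_real s)\<^sup>2)\<^sup>2"
  then have "deriv \<psi> 0 = 1 - cnj S * S \<or> deriv \<psi> 0 = - (1 - cnj S * S)"
    unfolding power2_eq_iff S_def[symmetric] S(2) by (simp add: power2_eq_square)
  then obtain \<epsilon> where \<epsilon>: "\<epsilon> = 1 \<or> \<epsilon> = -1" "deriv \<psi> 0 = \<epsilon> * (1 - cnj S * S)"
    by (metis mult_1 mult_minus1)
  then have "norm (deriv \<psi> 0) = 1 - (norm S)\<^sup>2"
    using S(1) by (auto simp: norm_mult norm_1_minus_cnj_mult_self)
  then have \<psi>_eq: "\<psi> q = disc_moebius (-S) (\<epsilon> * q)" if "norm q < 1" for q
    using disc_self_map_eq_moebius_if_extremal_deriv[OF \<psi>(1) _ \<psi>(3)[folded S_def] _ that] \<psi>(2) \<epsilon>(2) nz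
    by (auto simp: image_subset_iff)
  from \<epsilon>(1) show False
  proof
    assume "\<epsilon> = 1"
    obtain q where q: "norm q < 1" "\<phi> q = 0"
      using disc_aut_inverse[OF \<phi>] by (metis mem_ball_0 zero_less_one norm_zero)
    have "\<psi> q \<in> unit_disc" using \<psi>(2) q(1) by (auto simp: image_subset_iff)
    then have "pseudo_hyp_dist 0 (g 0) = pseudo_hyp_dist q (\<psi> q)"
      using conj[of q] q isometry[of q "\<psi> q"] by simp
    also have "\<dots> \<ge> s"
      using pseudo_hyp_dist_real_translation_ge[OF s q(1)] \<psi>_eq[OF q(1)] \<open>\<epsilon> = 1\<close> by (simp add: S_def)
    finally show False using g0 by simp
  next
    assume "\<epsilon> = -1"
    obtain r where r: "norm r < 1" "- disc_moebius S r = r"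
      using disc_swap_has_fixed_point[OF S(1)] by blast
    have "\<psi> r = r" using \<psi>_eq[OF r(1)] r(2) \<open>\<epsilon> = -1\<close> by (simp add: disc_moebius_minus)
    then have "g (\<phi> r) = \<phi> r" using conj[of r] r(1) by simp
    moreover have "\<phi> r \<in> unit_disc" using disc_autD(2)[OF \<phi>] r(1) by simp
    ultimately show False using g_free by blast
  qed
qed

lemma holomorphic_covering_deck_normal_form:
  assumes hol: "p holomorphic_on unit_disc" and cov: "covering_space unit_disc p D"
    and g: "g holomorphic_on unit_disc" "g ` unit_disc \<subseteq> unit_disc"
      "\<And>y. y \<in> unit_disc \<Longrightarrow> p (g y) = p y" "\<And>y. y \<in> unit_disc \<Longrightarrow> g y \<noteq> y"
    and z: "z \<in> unit_disc" "pseudo_hyp_dist z (g z) = s"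
    and s: "pseudo_hyp_dist 0 (g 0) < s" "s < 1"
  obtains \<phi> d where "\<phi> \<in> disc_aut" "p (\<phi> 0) = p (\<phi> (complex_of_real s))"
    "deriv (p \<circ> \<phi>) 0 = deriv (p \<circ> \<phi>) (complex_of_real s) * d"
    "deriv (p \<circ> \<phi>) (complex_of_real s) \<noteq> 0" "d\<^sup>2 \<noteq> (1 - (complex_of_real s)\<^sup>2)\<^sup>2"
proof -
  define S where "S = complex_of_real s"
  have "0 \<le> pseudo_hyp_dist 0 (g 0)" by (simp add: pseudo_hyp_dist_def)
  then have "0 < s" using s by simp
  then have S: "S \<in> unit_disc" using s by (simp add: S_def)
  have gz: "g z \<in> unit_disc" "g z \<noteq> z" using g(2,4) z(1) by blast+
  obtain \<phi> where \<phi>: "\<phi> \<in> disc_aut" "\<phi> 0 = z" "\<phi> S = g z"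
    and isometry: "\<And>x y. norm x < 1 \<Longrightarrow> norm y < 1 \<Longrightarrow> pseudo_hyp_dist (\<phi> x) (\<phi> y) = pseudo_hyp_dist x y"
    using disc_aut_two_points[of z "g z"] z gz by (auto simp: S_def)
  note \<phi>D = disc_autD[OF \<phi>(1)]
  obtain \<psi> where \<psi>: "\<psi> holomorphic_on unit_disc" "\<psi> ` unit_disc \<subseteq> unit_disc"
    and conj: "\<And>q. q \<in> unit_disc \<Longrightarrow> \<phi> (\<psi> q) = g (\<phi> q)"
    using disc_aut_conjugate[OF \<phi>(1) g(1,2)] by blast
  have "\<psi> 0 \<in> unit_disc" using \<psi>(2) by (simp add: image_subset_iff)
  then have \<psi>0: "\<psi> 0 = S"
    using conj[of 0] \<phi>(2,3) inj_onD[OF \<phi>D(3)] S by simp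
  have holF: "p \<circ> \<phi> holomorphic_on unit_disc"
    by (rule holomorphic_on_compose_gen[OF \<phi>D(1) hol]) (use \<phi>D(2) in blast)
  have "deriv (p \<circ> \<phi>) S * deriv \<psi> 0 = deriv (p \<circ> \<phi>) 0"
    using deriv_invariant_under_self_map[OF holF \<psi>(1) open_ball, of 0] \<psi>0 S conj g(3) \<phi>D(2)
    by auto
  moreover have "deriv (p \<circ> \<phi>) S \<noteq> 0"
  proof -
    have "deriv (p \<circ> \<phi>) S = deriv p (\<phi> S) * deriv \<phi> S"
      using \<phi>D S by (intro deriv_chain holomorphic_on_imp_differentiable_at[OF \<phi>D(1) open_ball]
          holomorphic_on_imp_differentiable_at[OF hol open_ball]) auto
    then show ?thesis
      using deriv_holomorphic_covering_nonzero[OF hol cov open_ball] deriv_disc_aut_nonzero[OF \<phi>(1)]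
        \<phi>D(2) S by simp
  qed
  moreover have "p (\<phi> 0) = p (\<phi> S)" using \<phi>(2,3) g(3) z(1) by simp
  moreover have "(deriv \<psi> 0)\<^sup>2 \<noteq> (1 - S\<^sup>2)\<^sup>2"
    unfolding S_def
    by (rule deck_conjugate_deriv_not_extremal[OF g(4) s(1) \<open>0 < s\<close> s(2) \<phi>(1) isometry \<psi>
          \<psi>0[unfolded S_def] conj])
  ultimately show ?thesis using that \<phi>(1) unfolding S_def by (metis mult.commute)
qed

lemma determinant_nonzero_up_to_swap:
  assumes hol: "p holomorphic_on unit_disc" and \<phi>: "\<phi> \<in> disc_aut" and S: "norm S < 1"
    and p\<phi>: "p (\<phi> 0) = p (\<phi> S)"
    and F: "deriv F 0 = deriv F S * d1" "deriv F S \<noteq> 0"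
    and p\<phi>': "deriv (p \<circ> \<phi>) 0 = deriv (p \<circ> \<phi>) S * d2" "deriv (p \<circ> \<phi>) S \<noteq> 0"
    and d2: "d2\<^sup>2 \<noteq> (cnj S * S - 1)\<^sup>2"
  obtains \<phi>' where "\<phi>' \<in> disc_aut" "p (\<phi>' 0) = p (\<phi>' S)"
    "deriv F 0 * deriv (p \<circ> \<phi>') S - deriv F S * deriv (p \<circ> \<phi>') 0 \<noteq> 0"
proof -
  define \<sigma> where "\<sigma> z = - disc_moebius S z" for z
  have "cnj S * S - 1 \<noteq> 0" using disc_moebius_denominator_nonzero[OF S S] by simp
  moreover have "p \<circ> \<phi> holomorphic_on unit_disc"
    using disc_autD[OF \<phi>] by (intro holomorphic_on_compose_gen[OF _ hol]) auto
  note swap = deriv_comp_disc_swap[OF this S, folded \<sigma>_def[abs_def] o_assoc]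
  ultimately consider
      "deriv F 0 * deriv (p \<circ> \<phi>) S - deriv F S * deriv (p \<circ> \<phi>) 0 \<noteq> 0"
    | "deriv F 0 * deriv (p \<circ> (\<phi> \<circ> \<sigma>)) S - deriv F S * deriv (p \<circ> (\<phi> \<circ> \<sigma>)) 0 \<noteq> 0"
    using determinants_vanish_imp_square_eq[OF F(1) p\<phi>'(1) F(2) p\<phi>'(2)] d2 unfolding swap by blast
  then show ?thesis
  proof cases
    case 1
    then show ?thesis using that[OF \<phi> p\<phi>] by blast
  next
    case 2
    moreover have "\<phi> \<circ> \<sigma> \<in> disc_aut" unfolding \<sigma>_def[abs_def]
      by (rule disc_aut_comp[OF \<phi> disc_swap_in_disc_aut[OF S]])
    moreover have "p ((\<phi> \<circ> \<sigma>) 0) = p ((\<phi> \<circ> \<sigma>) S)"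
      using p\<phi> by (simp add: \<sigma>_def disc_moebius_def)
    ultimately show ?thesis using that by blast
  qed
qed

lemma non_injective_coverings_common_normal_form:
  assumes hol: "p1 holomorphic_on unit_disc" "p2 holomorphic_on unit_disc"
    and cov: "covering_space unit_disc p1 D1" "covering_space unit_disc p2 D2"
    and "\<not> inj_on p1 unit_disc" "\<not> inj_on p2 unit_disc"
  obtains S \<phi>1 \<phi>2 d1 d2 where "norm S < 1" "S \<noteq> 0" "\<phi>1 \<in> disc_aut" "\<phi>2 \<in> disc_aut"
    "p1 (\<phi>1 0) = p1 (\<phi>1 S)" "p2 (\<phi>2 0) = p2 (\<phi>2 S)"
    "deriv (p1 \<circ> \<phi>1) 0 = deriv (p1 \<circ> \<phi>1) S * d1" "deriv (p1 \<circ> \<phi>1) S \<noteq> 0"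
    "deriv (p2 \<circ> \<phi>2) 0 = deriv (p2 \<circ> \<phi>2) S * d2" "deriv (p2 \<circ> \<phi>2) S \<noteq> 0"
    "d2\<^sup>2 \<noteq> (cnj S * S - 1)\<^sup>2"
proof -
  have sc: "simply_connected unit_disc" by (simp add: convex_imp_simply_connected)
  obtain g1 where g1: "g1 holomorphic_on unit_disc" "g1 ` unit_disc \<subseteq> unit_disc"
      "\<And>y. y \<in> unit_disc \<Longrightarrow> p1 (g1 y) = p1 y" "\<And>y. y \<in> unit_disc \<Longrightarrow> g1 y \<noteq> y"
    by (rule holomorphic_covering_nontrivial_deck_transformation[OF hol(1) cov(1) open_ball sc assms(5)])
      blast
  obtain g2 where g2: "g2 holomorphic_on unit_disc" "g2 ` unit_disc \<subseteq> unit_disc"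
      "\<And>y. y \<in> unit_disc \<Longrightarrow> p2 (g2 y) = p2 y" "\<And>y. y \<in> unit_disc \<Longrightarrow> g2 y \<noteq> y"
    by (rule holomorphic_covering_nontrivial_deck_transformation[OF hol(2) cov(2) open_ball sc assms(6)])
      blast
  obtain s z1 z2 where s: "pseudo_hyp_dist 0 (g1 0) < s" "pseudo_hyp_dist 0 (g2 0) < s" "s < 1"
    and z: "z1 \<in> unit_disc" "pseudo_hyp_dist z1 (g1 z1) = s" "z2 \<in> unit_disc" "pseudo_hyp_dist z2 (g2 z2) = s"
    using common_displacement_value[OF g1(1,2) _ g2(1,2)] g1(4)[of 0] g2(4)[of 0] by auto
  define S where "S = complex_of_real s"
  have "0 < s" using s(1) order.strict_trans1[OF norm_ge_zero] by (simp add: pseudo_hyp_dist_def)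
  then have S: "norm S < 1" "S \<noteq> 0" "(cnj S * S - 1)\<^sup>2 = (1 - S\<^sup>2)\<^sup>2"
    using s(3) by (simp_all add: S_def power2_eq_square algebra_simps)
  obtain \<phi>1 d1 where \<phi>1: "\<phi>1 \<in> disc_aut" "p1 (\<phi>1 0) = p1 (\<phi>1 S)"
      "deriv (p1 \<circ> \<phi>1) 0 = deriv (p1 \<circ> \<phi>1) S * d1" "deriv (p1 \<circ> \<phi>1) S \<noteq> 0"
    using holomorphic_covering_deck_normal_form[OF hol(1) cov(1) g1 z(1,2) s(1,3)] unfolding S_def by metis
  obtain \<phi>2 d2 where \<phi>2: "\<phi>2 \<in> disc_aut" "p2 (\<phi>2 0) = p2 (\<phi>2 S)"
      "deriv (p2 \<circ> \<phi>2) 0 = deriv (p2 \<circ> \<phi>2) S * d2" "deriv (p2 \<circ> \<phi>2) S \<noteq> 0"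
      "d2\<^sup>2 \<noteq> (1 - S\<^sup>2)\<^sup>2"
    using holomorphic_covering_deck_normal_form[OF hol(2) cov(2) g2 z(3,4) s(2,3)] unfolding S_def by metis
  show ?thesis
    by (rule that[OF S(1,2) \<phi>1(1) \<phi>2(1) \<phi>1(2) \<phi>2(2) \<phi>1(3,4) \<phi>2(3,4)]) (use \<phi>2(5) S(3) in simp)
qed

theorem mainTheorem6:
  fixes p1 p2 :: "complex \<Rightarrow> complex" and D1 D2 :: "complex set"
  assumes "is_domain D1" and "is_domain D2"
    and "holo_univ_covering p1 D1" and "holo_univ_covering p2 D2"
    and "\<not> inj_on p1 unit_disc" and "\<not> inj_on p2 unit_disc"
  shows "\<exists>\<phi>1\<in>disc_aut. \<exists>\<phi>2\<in>disc_aut. \<exists>q1\<in>unit_disc. \<exists>q2\<in>unit_disc. q1 \<noteq> q2 \<and>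
    p1 (\<phi>1 q1) = p1 (\<phi>1 q2) \<and> p2 (\<phi>2 q1) = p2 (\<phi>2 q2) \<and>
    deriv (p1 \<circ> \<phi>1) q1 * deriv (p2 \<circ> \<phi>2) q2
      - deriv (p1 \<circ> \<phi>1) q2 * deriv (p2 \<circ> \<phi>2) q1 \<noteq> 0"
proof -
  have hol: "p1 holomorphic_on unit_disc" "p2 holomorphic_on unit_disc"
    and cov: "covering_space unit_disc p1 D1" "covering_space unit_disc p2 D2"
    using assms(3,4) by (auto simp: holo_univ_covering_def)
  obtain S \<phi>1 \<phi>2 d1 d2 where S: "norm S < 1" "S \<noteq> 0" and \<phi>: "\<phi>1 \<in> disc_aut" "\<phi>2 \<in> disc_aut"
    and p\<phi>: "p1 (\<phi>1 0) = p1 (\<phi>1 S)" "p2 (\<phi>2 0) = p2 (\<phi>2 S)"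
    and d: "deriv (p1 \<circ> \<phi>1) 0 = deriv (p1 \<circ> \<phi>1) S * d1" "deriv (p1 \<circ> \<phi>1) S \<noteq> 0"
      "deriv (p2 \<circ> \<phi>2) 0 = deriv (p2 \<circ> \<phi>2) S * d2" "deriv (p2 \<circ> \<phi>2) S \<noteq> 0"
      "d2\<^sup>2 \<noteq> (cnj S * S - 1)\<^sup>2"
    using non_injective_coverings_common_normal_form[OF hol cov assms(5,6)] by metis
  obtain \<phi>2' where "\<phi>2' \<in> disc_aut" "p2 (\<phi>2' 0) = p2 (\<phi>2' S)"
    "deriv (p1 \<circ> \<phi>1) 0 * deriv (p2 \<circ> \<phi>2') S - deriv (p1 \<circ> \<phi>1) S * deriv (p2 \<circ> \<phi>2') 0 \<noteq> 0"
    using determinant_nonzero_up_to_swap[OF hol(2) \<phi>(2) S(1) p\<phi>(2) d] by blast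
  then show ?thesis
    using \<phi>(1) p\<phi>(1) S
    by (rule_tac bexI[where x = \<phi>1], rule_tac bexI[where x = \<phi>2'], rule_tac bexI[where x = 0],
        rule_tac bexI[where x = S]) auto
qed

end
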